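(* Let $n\ge2$. Then: (i) for all $I,J\subseteq[1,n-1]$: $a_I+a_J\in A_n$ if and only if $I\cap J=\emptyset$; (ii) for every $I\subseteq[1,n-1]$ and every $J$ that is either a subset of $[1,n-1]$ or of the form $Z\cup\{n+1\}$ with $Z\subseteq[1,n-1]$: $a_I+a_J\in B_n$ if and only if $I\cap J=\emptyset$; moreover, for $I\subseteq[1,n-1]$, $a_{[1,n]}+a_I\in B_n$ if and only if $I=\emptyset$; (iii) for all $I,J\subseteq[1,n+1]$: $a_I+a_J\in C_n$ if and only if either $I\cap J=\emptyset$, or $I\cup J=[1,n]$ and $n\in I\cap J$.
   Context: $[x,y]=\{z\in\mathbb Z:x\le z\le y\}$. Fix an integer $n\ge2$ and positive integers $a_1,\dots,a_{n+1}$ with (C1) $a_{n+1}=a_1+\dots+a_{n-1}+2a_n$ and (C2) $a_{i+1}>2(a_1+\dots+a_i)$ for all $i\in[1,n-1]$. For $I\subseteq[1,n+1]$ put $a_I=\sum_{i\in I}a_i$ ($a_\emptyset=0$). Define $A_n=\{a_I:I\subseteq[1,n-1]\}$, $B_n=A_n\cup\{a_{[1,n]}\}\cup(A_n+a_{n+1})$, $C_n=\{a_I:I\subseteq[1,n+1]\}$. *)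

theory Defs
  imports Main
begin

text \<open>The sequence a_1,...,a_{n+1} is modelled as a function a :: nat => int,
only the values at indices 1..n+1 matter.\<close>

definition aS :: "(nat \<Rightarrow> int) \<Rightarrow> nat set \<Rightarrow> int" where
  "aS a I = (\<Sum>i\<in>I. a i)"

definition An :: "(nat \<Rightarrow> int) \<Rightarrow> nat \<Rightarrow> int set" where
  "An a n = {aS a I | I. I \<subseteq> {1..n-1}}"

definition Bn :: "(nat \<Rightarrow> int) \<Rightarrow> nat \<Rightarrow> int set" where
  "Bn a n = An a n \<union> {aS a {1..n}} \<union> (\<lambda>x. x + a (n+1)) ` An a n"

definition Cn :: "(nat \<Rightarrow> int) \<Rightarrow> nat \<Rightarrow> int set" where
  "Cn a n = {aS a I | I. I \<subseteq> {1..n+1}}"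

end

theory Submission
  imports Defs
begin

text \<open>Condition (C2) makes a_1, ..., a_n superincreasing with ratio 2, so an integer has at
most one representation as a sum of c_i a_i with digits c_i in {0,1,2}. Comparing digits in
a_I + a_J = a_K forces I and J to be disjoint; this gives (i), and (ii) follows once the sums are
located relative to a_n and a_(n+1). In (iii) the only new phenomenon is a carry into
a_(n+1) = a_[1,n-1] + 2 a_n: an equation a_I + a_J = a_(n+1) + a_K with I, J, K in [1,n]
forces n into I and J, and comparing digits in a_(I-{n}) + a_(J-{n}) = a_[1,n-1] + a_K then
forces I and J to cover [1,n].\<close>

text \<open>For \<open>k = 1\<close> this is the classical notion of a superincreasing sequence.\<close>

definition superincreasing :: "int \<Rightarrow> (nat \<Rightarrow> int) \<Rightarrow> nat \<Rightarrow> bool" where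
  "superincreasing k a m \<longleftrightarrow> (\<forall>i\<in>{1..m}. 0 < a i \<and> k * (\<Sum>j\<in>{1..<i}. a j) < a i)"

lemma superincreasing_le:
  "superincreasing k a m' \<Longrightarrow> m \<le> m' \<Longrightarrow> superincreasing k a m"
  unfolding superincreasing_def by auto

lemma digit_sum_bounds:
  fixes a c :: "nat \<Rightarrow> int"
  assumes "\<forall>i\<in>{1..m}. 0 < a i" and "\<forall>i\<in>{1..m}. 0 \<le> c i \<and> c i \<le> k"
  shows "0 \<le> (\<Sum>i\<in>{1..m}. c i * a i)" and "(\<Sum>i\<in>{1..m}. c i * a i) \<le> k * (\<Sum>i\<in>{1..m}. a i)"
proof -
  show "0 \<le> (\<Sum>i\<in>{1..m}. c i * a i)"
    using assms by (intro sum_nonneg mult_nonneg_nonneg) (auto simp: less_imp_le)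
  have "0 \<le> a i" if "i \<in> {1..m}" for i
    using assms(1) that by (simp add: less_imp_le)
  then have "(\<Sum>i\<in>{1..m}. c i * a i) \<le> (\<Sum>i\<in>{1..m}. k * a i)"
    using assms(2) by (intro sum_mono mult_right_mono) auto
  then show "(\<Sum>i\<in>{1..m}. c i * a i) \<le> k * (\<Sum>i\<in>{1..m}. a i)"
    by (simp add: sum_distrib_left)
qed

lemma superincreasing_digits_unique:
  fixes a c d :: "nat \<Rightarrow> int"
  assumes "superincreasing k a m"
    and "\<forall>i\<in>{1..m}. 0 \<le> c i \<and> c i \<le> k" and "\<forall>i\<in>{1..m}. 0 \<le> d i \<and> d i \<le> k"
    and "(\<Sum>i\<in>{1..m}. c i * a i) = (\<Sum>i\<in>{1..m}. d i * a i)"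
  shows "\<forall>i\<in>{1..m}. c i = d i"
  using assms
proof (induction m)
  case 0
  then show ?case by simp
next
  case (Suc m)
  let ?C = "\<Sum>i\<in>{1..m}. c i * a i" and ?D = "\<Sum>i\<in>{1..m}. d i * a i"
  have pos: "\<forall>i\<in>{1..m}. 0 < a i"
    using Suc.prems(1) by (auto simp: superincreasing_def)
  have "0 < a (Suc m) \<and> k * (\<Sum>i\<in>{1..<Suc m}. a i) < a (Suc m)"
    using Suc.prems(1) unfolding superincreasing_def by (rule bspec) simp
  then have top: "0 < a (Suc m)" "k * (\<Sum>i\<in>{1..m}. a i) < a (Suc m)"
    unfolding atLeastLessThanSuc_atLeastAtMost by simp_all
  have digits: "\<forall>i\<in>{1..m}. 0 \<le> c i \<and> c i \<le> k" "\<forall>i\<in>{1..m}. 0 \<le> d i \<and> d i \<le> k"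
    using Suc.prems(2,3) by auto
  have bounds: "0 \<le> ?C" "?C \<le> k * (\<Sum>i\<in>{1..m}. a i)" "0 \<le> ?D" "?D \<le> k * (\<Sum>i\<in>{1..m}. a i)"
    using digit_sum_bounds[OF pos digits(1)] digit_sum_bounds[OF pos digits(2)] by auto
  have eq: "(c (Suc m) - d (Suc m)) * a (Suc m) = ?D - ?C"
    using Suc.prems(4) by (simp add: algebra_simps)
  have top_digit: "c (Suc m) = d (Suc m)"
  proof (rule ccontr)
    assume "c (Suc m) \<noteq> d (Suc m)"
    then have "1 \<le> \<bar>c (Suc m) - d (Suc m)\<bar>"
      by linarith
    then have "a (Suc m) \<le> \<bar>c (Suc m) - d (Suc m)\<bar> * a (Suc m)"
      using mult_right_mono[of 1 _ "a (Suc m)"] top(1) by simp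
    also have "\<dots> = \<bar>(c (Suc m) - d (Suc m)) * a (Suc m)\<bar>"
      using top(1) by (simp add: abs_mult)
    also have "\<dots> = \<bar>?D - ?C\<bar>"
      by (simp only: eq)
    also have "\<dots> \<le> k * (\<Sum>i\<in>{1..m}. a i)"
      using bounds by linarith
    finally show False
      using top(2) by linarith
  qed
  have "\<forall>i\<in>{1..m}. c i = d i"
    using Suc top_digit by (simp add: superincreasing_le)
  with top_digit show ?case
    by (auto simp: le_Suc_eq)
qed

lemma subset_atLeastAtMost_remove_top:
  fixes X :: "nat set"
  assumes "X \<subseteq> {1..m}" and "m \<notin> X"
  shows "X \<subseteq> {1..m-1}"
proof
  fix x assume "x \<in> X"
  with assms have "x \<in> {1..m}" "x \<noteq> m"
    by auto
  then show "x \<in> {1..m-1}"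
    by auto
qed

lemma aS_empty [simp]: "aS a {} = 0"
  by (simp add: aS_def)

lemma aS_insert: "finite I \<Longrightarrow> i \<notin> I \<Longrightarrow> aS a (insert i I) = a i + aS a I"
  by (simp add: aS_def)

lemma aS_remove: "finite I \<Longrightarrow> i \<in> I \<Longrightarrow> aS a I = a i + aS a (I - {i})"
  unfolding aS_def by (rule sum.remove)

lemma aS_union_disjoint: "finite I \<Longrightarrow> finite J \<Longrightarrow> I \<inter> J = {} \<Longrightarrow> aS a (I \<union> J) = aS a I + aS a J"
  by (simp add: aS_def sum.union_disjoint)

lemma aS_Un_Int: "finite I \<Longrightarrow> finite J \<Longrightarrow> aS a I + aS a J = aS a (I \<union> J) + aS a (I \<inter> J)"
  by (simp add: aS_def sum.union_inter)

lemma aS_nonneg: "(\<And>i. i \<in> I \<Longrightarrow> 0 \<le> a i) \<Longrightarrow> 0 \<le> aS a I"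
  unfolding aS_def by (rule sum_nonneg)

lemma aS_pos: "finite I \<Longrightarrow> I \<noteq> {} \<Longrightarrow> (\<And>i. i \<in> I \<Longrightarrow> 0 < a i) \<Longrightarrow> 0 < aS a I"
  unfolding aS_def by (rule sum_pos)

lemma aS_mono: "I \<subseteq> J \<Longrightarrow> finite J \<Longrightarrow> (\<And>i. i \<in> J \<Longrightarrow> 0 \<le> a i) \<Longrightarrow> aS a I \<le> aS a J"
  unfolding aS_def by (rule sum_mono2) auto

lemma aS_eq_indicator_sum:
  "finite A \<Longrightarrow> I \<subseteq> A \<Longrightarrow> aS a I = (\<Sum>i\<in>A. of_bool (i \<in> I) * a i)"
  by (simp add: aS_def Int_absorb1 Int_def[symmetric])

lemma superincreasing_subset_sums_eq:
  assumes "superincreasing 2 a m"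
    and "I \<subseteq> {1..m}" "J \<subseteq> {1..m}" "K \<subseteq> {1..m}" "L \<subseteq> {1..m}"
    and "aS a I + aS a J = aS a K + aS a L" and "i \<in> {1..m}"
  shows "of_bool (i \<in> I) + of_bool (i \<in> J) = (of_bool (i \<in> K) + of_bool (i \<in> L) :: int)"
proof -
  have "(\<Sum>i\<in>{1..m}. (of_bool (i \<in> I) + of_bool (i \<in> J)) * a i)
      = (\<Sum>i\<in>{1..m}. (of_bool (i \<in> K) + of_bool (i \<in> L)) * a i)"
    using assms(2-6) by (simp add: aS_eq_indicator_sum[of "{1..m}"] distrib_right sum.distrib)
  from superincreasing_digits_unique[OF assms(1) _ _ this] assms(7) show ?thesis
    by auto
qed

lemma superincreasing_disjoint_if_sum_eq:
  assumes "superincreasing 2 a m" "I \<subseteq> {1..m}" "J \<subseteq> {1..m}" "K \<subseteq> {1..m}"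
    and "aS a I + aS a J = aS a K"
  shows "I \<inter> J = {}"
proof (rule equals0I)
  fix i assume i: "i \<in> I \<inter> J"
  with assms(2) have "i \<in> {1..m}" by blast
  from superincreasing_subset_sums_eq[OF assms(1-4) empty_subsetI _ this] assms(5) i
  have "2 = (of_bool (i \<in> K) :: int)"
    by simp
  then show False
    by (cases "i \<in> K") auto
qed

lemma superincreasing_cover_if_sum_eq:
  assumes "superincreasing 2 a m" "I \<subseteq> {1..m}" "J \<subseteq> {1..m}" "K \<subseteq> {1..m}"
    and "aS a I + aS a J = aS a {1..m} + aS a K"
  shows "{1..m} \<subseteq> I \<union> J"
proof
  fix i assume "i \<in> {1..m}"
  with superincreasing_subset_sums_eq[OF assms(1-3) order.refl assms(4) assms(5)]
  have "of_bool (i \<in> I) + of_bool (i \<in> J) = (1 + of_bool (i \<in> K) :: int)"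
    by simp
  then show "i \<in> I \<union> J"
    by (cases "i \<in> I"; cases "i \<in> J"; cases "i \<in> K") auto
qed

locale sumset_sequence =
  fixes a :: "nat \<Rightarrow> int" and n :: nat
  assumes n_ge_2: "n \<ge> 2"
    and a_pos: "\<forall>i\<in>{1..n+1}. a i > 0"
    and C1: "a (n+1) = (\<Sum>i\<in>{1..n-1}. a i) + 2 * a n"
    and C2: "\<forall>i\<in>{1..n-1}. a (i+1) > 2 * (\<Sum>j\<in>{1..i}. a j)"
begin

abbreviation head_sum :: int where
  "head_sum \<equiv> aS a {1..n-1}"

lemma superincreasing_initial: "superincreasing 2 a n"
  unfolding superincreasing_def
proof
  fix i assume i: "i \<in> {1..n}"
  show "0 < a i \<and> 2 * (\<Sum>j\<in>{1..<i}. a j) < a i"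
  proof (cases "i = 1")
    case True
    then show ?thesis using a_pos by simp
  next
    case False
    with i obtain j where "i = Suc j" "j \<in> {1..n-1}"
      by (cases i) auto
    then show ?thesis
      using C2 a_pos i by (auto simp: atLeastLessThanSuc_atLeastAtMost)
  qed
qed

lemma superincreasing_head: "superincreasing 2 a (n-1)"
  using superincreasing_initial by (rule superincreasing_le) simp

lemma a_n_pos: "0 < a n"
  using a_pos n_ge_2 by simp

lemma a_last_pos: "0 < a (n+1)"
  using a_pos by simp

lemma head_sum_lt: "2 * head_sum < a n"
proof -
  have "0 < a n \<and> 2 * (\<Sum>j\<in>{1..<n}. a j) < a n"
    using superincreasing_initial unfolding superincreasing_def by (rule bspec) (use n_ge_2 in simp)
  moreover have "{1..<n} = {1..n-1}"
    using n_ge_2 by auto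
  ultimately show ?thesis
    by (simp add: aS_def)
qed

lemma a_last_eq: "a (n+1) = head_sum + 2 * a n"
  using C1 by (simp add: aS_def)

lemma aS_initial: "aS a {1..n} = head_sum + a n"
proof -
  have "{1..n} = insert n {1..n-1}"
    using n_ge_2 by auto
  then show ?thesis
    using n_ge_2 by (simp add: aS_insert)
qed

lemma initial_segment_subset: "I \<subseteq> {1..m} \<Longrightarrow> m \<le> n+1 \<Longrightarrow> I \<subseteq> {1..n+1}"
  by (erule order.trans) auto

lemma aS_subset_nonneg: "I \<subseteq> {1..n+1} \<Longrightarrow> 0 \<le> aS a I"
  using a_pos by (intro aS_nonneg) (auto simp: less_imp_le)

lemma aS_subset_pos: "I \<subseteq> {1..n+1} \<Longrightarrow> I \<noteq> {} \<Longrightarrow> 0 < aS a I"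
  using a_pos by (intro aS_pos) (auto intro: finite_subset)

lemma aS_subset_mono: "I \<subseteq> J \<Longrightarrow> J \<subseteq> {1..n+1} \<Longrightarrow> aS a I \<le> aS a J"
  using a_pos by (intro aS_mono) (auto intro: finite_subset simp: less_imp_le)

lemma head_sum_nonneg: "0 \<le> head_sum"
  by (rule aS_subset_nonneg) auto

lemma aS_le_head_sum: "I \<subseteq> {1..n-1} \<Longrightarrow> aS a I \<le> head_sum"
  by (rule aS_subset_mono) auto

lemma aS_le_initial: "I \<subseteq> {1..n} \<Longrightarrow> aS a I \<le> head_sum + a n"
  using aS_subset_mono[of I "{1..n}"] aS_initial by auto

lemma An_bounds:
  assumes "x \<in> An a n"
  shows "0 \<le> x" and "x \<le> head_sum"
proof -
  obtain I where I: "I \<subseteq> {1..n-1}" and x: "x = aS a I"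
    using assms unfolding An_def by blast
  show "0 \<le> x"
    unfolding x using I by (intro aS_subset_nonneg initial_segment_subset) auto
  show "x \<le> head_sum"
    unfolding x using I by (rule aS_le_head_sum)
qed

lemma Bn_below_a_n_iff: "x < a n \<Longrightarrow> x \<in> Bn a n \<longleftrightarrow> x \<in> An a n"
  unfolding Bn_def using An_bounds aS_initial head_sum_nonneg a_last_eq a_n_pos by fastforce

lemma Bn_above_a_last_iff:
  assumes "a (n+1) \<le> x"
  shows "x \<in> Bn a n \<longleftrightarrow> x - a (n+1) \<in> An a n"
proof -
  have "x \<notin> An a n"
    using assms An_bounds(2) head_sum_lt head_sum_nonneg a_last_eq a_n_pos by fastforce
  moreover have "x \<noteq> aS a {1..n}"
    using assms aS_initial a_last_eq a_n_pos by linarith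
  moreover have "x \<in> (\<lambda>y. y + a (n+1)) ` An a n \<longleftrightarrow> x - a (n+1) \<in> An a n"
    by (auto simp: image_iff intro: bexI[where x = "x - a (n+1)"])
  ultimately show ?thesis
    by (simp add: Bn_def)
qed

lemma not_in_Bn_between:
  assumes "aS a {1..n} < x" and "x < a (n+1)"
  shows "x \<notin> Bn a n"
proof -
  have "x \<notin> An a n"
    using assms(1) An_bounds(2) aS_initial a_n_pos by fastforce
  moreover have "x \<notin> (\<lambda>y. y + a (n+1)) ` An a n"
    using assms(2) An_bounds(1) by fastforce
  ultimately show ?thesis
    using assms(1) by (simp add: Bn_def)
qed

lemma An_sum_iff:
  assumes "I \<subseteq> {1..n-1}" "J \<subseteq> {1..n-1}"
  shows "aS a I + aS a J \<in> An a n \<longleftrightarrow> I \<inter> J = {}"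
proof
  assume "aS a I + aS a J \<in> An a n"
  then obtain K where "K \<subseteq> {1..n-1}" "aS a I + aS a J = aS a K"
    unfolding An_def by auto
  then show "I \<inter> J = {}"
    using superincreasing_disjoint_if_sum_eq[OF superincreasing_head assms] by blast
next
  assume "I \<inter> J = {}"
  then have "aS a I + aS a J = aS a (I \<union> J)"
    using assms by (intro aS_union_disjoint[symmetric]) (auto intro: finite_subset)
  moreover have "I \<union> J \<subseteq> {1..n-1}"
    using assms by auto
  ultimately show "aS a I + aS a J \<in> An a n"
    unfolding An_def by blast
qed

lemma Bn_sum_iff:
  assumes "I \<subseteq> {1..n-1}" "J \<subseteq> {1..n-1}"
  shows "aS a I + aS a J \<in> Bn a n \<longleftrightarrow> I \<inter> J = {}"
proof -
  have "aS a I + aS a J < a n"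
    using aS_le_head_sum[OF assms(1)] aS_le_head_sum[OF assms(2)] head_sum_lt by linarith
  then show ?thesis
    using Bn_below_a_n_iff An_sum_iff[OF assms] by blast
qed

lemma Bn_sum_insert_last_iff:
  assumes "I \<subseteq> {1..n-1}" "Z \<subseteq> {1..n-1}"
  shows "aS a I + aS a (Z \<union> {n+1}) \<in> Bn a n \<longleftrightarrow> I \<inter> (Z \<union> {n+1}) = {}"
proof -
  have "finite Z" "n+1 \<notin> Z"
    using assms(2) by (auto intro: finite_subset)
  then have "aS a (Z \<union> {n+1}) = a (n+1) + aS a Z"
    by (simp add: aS_insert)
  moreover have "I \<inter> (Z \<union> {n+1}) = I \<inter> Z"
    using assms(1) by auto
  moreover have "0 \<le> aS a I + aS a Z"
    using assms by (intro add_nonneg_nonneg aS_subset_nonneg initial_segment_subset) auto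
  ultimately show ?thesis
    using Bn_above_a_last_iff An_sum_iff[OF assms] by (simp add: add.commute add.left_commute)
qed

lemma Bn_initial_sum_iff:
  assumes "I \<subseteq> {1..n-1}"
  shows "aS a {1..n} + aS a I \<in> Bn a n \<longleftrightarrow> I = {}"
proof
  assume "aS a {1..n} + aS a I \<in> Bn a n"
  show "I = {}"
  proof (rule ccontr)
    assume "I \<noteq> {}"
    with assms have "0 < aS a I"
      by (intro aS_subset_pos) auto
    moreover have "aS a I \<le> head_sum"
      using aS_le_head_sum[OF assms] .
    ultimately have "aS a {1..n} < aS a {1..n} + aS a I" "aS a {1..n} + aS a I < a (n+1)"
      using aS_initial a_last_eq head_sum_lt head_sum_nonneg by linarith+
    with \<open>aS a {1..n} + aS a I \<in> Bn a n\<close> show False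
      using not_in_Bn_between by blast
  qed
next
  assume "I = {}"
  then show "aS a {1..n} + aS a I \<in> Bn a n"
    unfolding Bn_def by simp
qed

lemma aS_split_last:
  assumes "X \<subseteq> {1..n+1}"
  shows "aS a X = of_bool (n+1 \<in> X) * a (n+1) + aS a (X - {n+1})"
proof (cases "n+1 \<in> X")
  case True
  with assms show ?thesis
    using aS_remove[of X "n+1" a] by (auto intro: finite_subset)
qed simp

lemma sum_eq_last_plus_imp_cover:
  assumes I: "I \<subseteq> {1..n}" and J: "J \<subseteq> {1..n}" and K: "K \<subseteq> {1..n}"
    and eq: "aS a I + aS a J = a (n+1) + aS a K"
  shows "I \<union> J = {1..n}" and "n \<in> I \<inter> J"
proof -
  have below_n: "aS a X \<le> head_sum" if "X \<subseteq> {1..n}" "n \<notin> X" for X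
    using that by (intro aS_le_head_sum subset_atLeastAtMost_remove_top)
  have bounds: "0 \<le> aS a X" "aS a X \<le> head_sum + a n" if "X \<subseteq> {1..n}" for X
    using aS_subset_nonneg[OF initial_segment_subset[OF that]] aS_le_initial[OF that] by simp_all
  have lt: "head_sum < a n"
    using head_sum_lt head_sum_nonneg by linarith
  have nI: "n \<in> I"
  proof (rule ccontr)
    assume "n \<notin> I"
    with below_n[OF I] bounds[OF J] bounds[OF K] eq a_last_eq lt show False
      by linarith
  qed
  have nJ: "n \<in> J"
  proof (rule ccontr)
    assume "n \<notin> J"
    with below_n[OF J] bounds[OF I] bounds[OF K] eq a_last_eq lt show False
      by linarith
  qed
  have fin: "finite X" if "X \<subseteq> {1..n}" for X
    using that by (rule finite_subset) simp
  have nK: "n \<notin> K"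
  proof
    assume "n \<in> K"
    then have "aS a K = a n + aS a (K - {n})"
      using fin[OF K] by (rule aS_remove[rotated])
    moreover have "K - {n} \<subseteq> {1..n}"
      using K by auto
    ultimately show False
      using bounds[OF I] bounds[OF J] bounds[of "K - {n}"] eq a_last_eq lt by linarith
  qed
  have "aS a (I - {n}) + aS a (J - {n}) = aS a {1..n-1} + aS a K"
    using aS_remove[OF fin[OF I] nI, where a = a] aS_remove[OF fin[OF J] nJ, where a = a] eq a_last_eq by linarith
  moreover have "I - {n} \<subseteq> {1..n-1}" "J - {n} \<subseteq> {1..n-1}" "K \<subseteq> {1..n-1}"
    using subset_atLeastAtMost_remove_top[of "I - {n}" n] subset_atLeastAtMost_remove_top[of "J - {n}" n]
      subset_atLeastAtMost_remove_top[OF K nK] I J by auto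
  ultimately have "{1..n-1} \<subseteq> (I - {n}) \<union> (J - {n})"
    by (intro superincreasing_cover_if_sum_eq[OF superincreasing_head])
  moreover have "{1..n} = insert n {1..n-1}"
    using n_ge_2 by auto
  ultimately show "I \<union> J = {1..n}"
    using I J nI by auto
  show "n \<in> I \<inter> J"
    using nI nJ by blast
qed

lemma sum_eq_last_plus_if_cover:
  assumes "I \<union> J = {1..n}" and "n \<in> I \<inter> J"
  shows "aS a I + aS a J = a (n+1) + aS a (I \<inter> J - {n})"
proof -
  have fin: "finite I" "finite J"
    using assms(1) by (metis finite_Un finite_atLeastAtMost)+
  have "aS a I + aS a J = aS a {1..n} + aS a (I \<inter> J)"
    using aS_Un_Int[OF fin] assms(1) by simp
  also have "\<dots> = aS a {1..n} + a n + aS a (I \<inter> J - {n})"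
    using aS_remove[of "I \<inter> J" n a] fin assms(2) by simp
  also have "\<dots> = a (n+1) + aS a (I \<inter> J - {n})"
    using aS_initial a_last_eq by simp
  finally show ?thesis .
qed

lemma aS_lt_last:
  assumes "X \<subseteq> {1..n+1}" and "n+1 \<notin> X"
  shows "aS a X < a (n+1)"
proof -
  from subset_atLeastAtMost_remove_top[OF assms] have "X \<subseteq> {1..n}"
    by simp
  then have "aS a X \<le> head_sum + a n"
    by (rule aS_le_initial)
  then show ?thesis
    using a_last_eq a_n_pos by linarith
qed

lemma last_le_aS:
  assumes "X \<subseteq> {1..n+1}" and "n+1 \<in> X"
  shows "a (n+1) \<le> aS a X"
proof -
  have "0 \<le> aS a (X - {n+1})"
    using assms(1) by (intro aS_subset_nonneg) auto
  then show ?thesis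
    using aS_split_last[OF assms(1)] assms(2) by simp
qed

lemma aS_lt_twice_last:
  assumes "X \<subseteq> {1..n+1}"
  shows "aS a X < 2 * a (n+1)"
proof -
  have "aS a (X - {n+1}) < a (n+1)"
    using assms by (intro aS_lt_last) auto
  moreover have "of_bool (n+1 \<in> X) * a (n+1) \<le> a (n+1)"
    using a_last_pos by (cases "n+1 \<in> X") auto
  ultimately show ?thesis
    using aS_split_last[OF assms] by linarith
qed

lemma last_index_of_sum_eq:
  assumes I: "I \<subseteq> {1..n+1}" and J: "J \<subseteq> {1..n+1}" and K: "K \<subseteq> {1..n+1}"
    and eq: "aS a I + aS a J = aS a K"
  shows "n+1 \<notin> I \<inter> J" and "n+1 \<in> I \<union> J \<Longrightarrow> n+1 \<in> K"
proof -
  show "n+1 \<notin> I \<inter> J"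
  proof
    assume "n+1 \<in> I \<inter> J"
    then have "a (n+1) \<le> aS a I" "a (n+1) \<le> aS a J"
      using last_le_aS[OF I] last_le_aS[OF J] by blast+
    then show False
      using aS_lt_twice_last[OF K] eq by linarith
  qed
  assume "n+1 \<in> I \<union> J"
  moreover have "0 \<le> aS a I" "0 \<le> aS a J"
    using I J by (simp_all add: aS_subset_nonneg)
  ultimately have "a (n+1) \<le> aS a I + aS a J"
    using last_le_aS[OF I] last_le_aS[OF J] by (auto intro: add_increasing add_increasing2)
  then show "n+1 \<in> K"
    using aS_lt_last[OF K] eq by force
qed

lemma Cn_sum_imp:
  assumes I: "I \<subseteq> {1..n+1}" and J: "J \<subseteq> {1..n+1}" and "aS a I + aS a J \<in> Cn a n"
  shows "I \<inter> J = {} \<or> (I \<union> J = {1..n} \<and> n \<in> I \<inter> J)"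
proof -
  obtain K where K: "K \<subseteq> {1..n+1}" and eq: "aS a I + aS a J = aS a K"
    using assms(3) unfolding Cn_def by blast
  note last = last_index_of_sum_eq[OF I J K eq]
  define I' J' K' where "I' = I - {n+1}" and "J' = J - {n+1}" and "K' = K - {n+1}"
  have sub': "I' \<subseteq> {1..n}" "J' \<subseteq> {1..n}" "K' \<subseteq> {1..n}"
    using I J K unfolding I'_def J'_def K'_def by auto
  note split = aS_split_last[OF I, folded I'_def] aS_split_last[OF J, folded J'_def]
    aS_split_last[OF K, folded K'_def]
  show ?thesis
  proof (cases "n+1 \<in> K \<and> n+1 \<notin> I \<union> J")
    case True
    then have "I' = I" "J' = J"
      unfolding I'_def J'_def by auto
    moreover have "aS a I' + aS a J' = a (n+1) + aS a K'"
      using eq split True by simp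
    ultimately show ?thesis
      using sum_eq_last_plus_imp_cover[OF sub'] by simp
  next
    case False
    then have "of_bool (n+1 \<in> I) + of_bool (n+1 \<in> J) = (of_bool (n+1 \<in> K) :: int)"
      using last by auto
    then have "of_bool (n+1 \<in> I) * a (n+1) + of_bool (n+1 \<in> J) * a (n+1)
        = of_bool (n+1 \<in> K) * a (n+1)"
      by (metis distrib_right)
    then have "aS a I' + aS a J' = aS a K'"
      using eq split by linarith
    then have "I' \<inter> J' = {}"
      using superincreasing_disjoint_if_sum_eq[OF superincreasing_initial sub'] by blast
    then show ?thesis
      using last(1) unfolding I'_def J'_def by blast
  qed
qed

lemma Cn_sum_iff:
  assumes I: "I \<subseteq> {1..n+1}" and J: "J \<subseteq> {1..n+1}"
  shows "aS a I + aS a J \<in> Cn a n \<longleftrightarrow> I \<inter> J = {} \<or> (I \<union> J = {1..n} \<and> n \<in> I \<inter> J)"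
proof
  assume "I \<inter> J = {} \<or> (I \<union> J = {1..n} \<and> n \<in> I \<inter> J)"
  then consider "I \<inter> J = {}" | "I \<union> J = {1..n}" "n \<in> I \<inter> J"
    by blast
  then show "aS a I + aS a J \<in> Cn a n"
  proof cases
    case 1
    then have "aS a I + aS a J = aS a (I \<union> J)"
      using I J by (intro aS_union_disjoint[symmetric]) (auto intro: finite_subset)
    with I J show ?thesis
      unfolding Cn_def by blast
  next
    case 2
    let ?L = "I \<inter> J - {n}"
    have L: "?L \<subseteq> {1..n}"
      using 2(1) by blast
    have "finite ?L"
      using L by (rule finite_subset) simp
    moreover have "n+1 \<notin> ?L"
      using subsetD[OF L, of "n+1"] by auto
    ultimately have "aS a I + aS a J = aS a (insert (n+1) ?L)"
      using sum_eq_last_plus_if_cover[OF 2] by (simp add: aS_insert)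
    moreover have "insert (n+1) ?L \<subseteq> {1..n+1}"
      using order.trans[OF L, of "{1..n+1}"] by simp
    ultimately show ?thesis
      unfolding Cn_def by blast
  qed
qed (rule Cn_sum_imp[OF I J])

end

theorem lemma3p8:
  fixes a :: "nat \<Rightarrow> int" and n :: nat
  assumes hn: "n \<ge> 2"
    and hpos: "\<forall>i\<in>{1..n+1}. a i > 0"
    and C1: "a (n+1) = (\<Sum>i\<in>{1..n-1}. a i) + 2 * a n"
    and C2: "\<forall>i\<in>{1..n-1}. a (i+1) > 2 * (\<Sum>j\<in>{1..i}. a j)"
  shows "(\<forall>I J. I \<subseteq> {1..n-1} \<longrightarrow> J \<subseteq> {1..n-1} \<longrightarrow>
            (aS a I + aS a J \<in> An a n \<longleftrightarrow> I \<inter> J = {}))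
       \<and> (\<forall>I J. I \<subseteq> {1..n-1} \<longrightarrow>
            (J \<subseteq> {1..n-1} \<or> (\<exists>Z. Z \<subseteq> {1..n-1} \<and> J = Z \<union> {n+1})) \<longrightarrow>
            (aS a I + aS a J \<in> Bn a n \<longleftrightarrow> I \<inter> J = {}))
       \<and> (\<forall>I. I \<subseteq> {1..n-1} \<longrightarrow>
            (aS a {1..n} + aS a I \<in> Bn a n \<longleftrightarrow> I = {}))
       \<and> (\<forall>I J. I \<subseteq> {1..n+1} \<longrightarrow> J \<subseteq> {1..n+1} \<longrightarrow>
            (aS a I + aS a J \<in> Cn a n \<longleftrightarrow>
               I \<inter> J = {} \<or> (I \<union> J = {1..n} \<and> n \<in> I \<inter> J)))"
proof -
  interpret sumset_sequence a n
    using assms by unfold_locales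
  show ?thesis
  proof (intro conjI allI impI)
    fix I J
    assume "I \<subseteq> {1..n-1}" and "J \<subseteq> {1..n-1} \<or> (\<exists>Z. Z \<subseteq> {1..n-1} \<and> J = Z \<union> {n+1})"
    then show "aS a I + aS a J \<in> Bn a n \<longleftrightarrow> I \<inter> J = {}"
      using Bn_sum_iff Bn_sum_insert_last_iff by blast
  qed (assumption | rule An_sum_iff Bn_initial_sum_iff Cn_sum_iff)+
qed

end
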